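(* Let $(G,\precsim)$ be a compatible quasi-ordered abelian group such that $\precsim$ is an order (i.e. also antisymmetric) and $G$ is not isomorphic to $\mathbb{Z}/2\mathbb{Z}$. Then $(G,\precsim)$ is an ordered abelian group, i.e. $x\precsim y\Rightarrow x+z\precsim y+z$ for all $x,y,z\in G$.
   Context: A compatible quasi-ordered abelian group is an abelian group $G$ with a total quasi-order $\precsim$ (reflexive, transitive, any two elements comparable) such that, writing $a\sim b$ for $a\precsim b\wedge b\precsim a$: $(Q_1)$ $x\sim0\Rightarrow x=0$; $(Q_2)$ $x\precsim y\wedge y\not\sim z\Rightarrow x+z\precsim y+z$, for all $x,y,z$. *)

theory Defs
  imports Main "HOL-Library.Z2"
begin

definition total_quasi_order :: "('a \<Rightarrow> 'a \<Rightarrow> bool) \<Rightarrow> bool" where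
  "total_quasi_order le \<longleftrightarrow>
     (\<forall>x. le x x) \<and> (\<forall>x y z. le x y \<longrightarrow> le y z \<longrightarrow> le x z) \<and> (\<forall>x y. le x y \<or> le y x)"

definition qequiv :: "('a \<Rightarrow> 'a \<Rightarrow> bool) \<Rightarrow> 'a \<Rightarrow> 'a \<Rightarrow> bool" where
  "qequiv le x y \<longleftrightarrow> le x y \<and> le y x"

definition compatible_qo_group :: "('a::ab_group_add \<Rightarrow> 'a \<Rightarrow> bool) \<Rightarrow> bool" where
  "compatible_qo_group le \<longleftrightarrow> total_quasi_order le
     \<and> (\<forall>x. qequiv le x 0 \<longrightarrow> x = 0)
     \<and> (\<forall>x y z. le x y \<and> \<not> qequiv le y z \<longrightarrow> le (x + z) (y + z))"

text \<open>Group isomorphism of the additive group onto Z/2Z (HOL-Library type bit).\<close>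
definition iso_to_Z2 :: "'a::ab_group_add itself \<Rightarrow> bool" where
  "iso_to_Z2 _ \<longleftrightarrow> (\<exists>f :: 'a \<Rightarrow> bit. bij f \<and> (\<forall>x y. f (x + y) = f x + f y))"

end

theory Submission
  imports Defs
begin

text \<open>When \<open>\<precsim>\<close> is antisymmetric, \<open>y \<sim> z\<close> just means \<open>y = z\<close>, so (Q2) already gives
  \<open>x \<precsim> y \<Longrightarrow> x + z \<precsim> y + z\<close> except when \<open>z = y\<close>. That remaining case is reduced to (Q2)
  by translating through \<open>-y\<close> and \<open>y + y\<close> when \<open>y + y \<noteq> 0\<close>. When \<open>y\<close> has order two, a failure
  forces \<open>x = 0 \<precsim> y\<close>; translating \<open>0 \<precsim> y\<close> by an element \<open>a \<notin> {0, y}\<close> and then by \<open>y\<close>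
  yields \<open>a + y \<precsim> a \<precsim> a + y\<close>, hence \<open>y = 0\<close>. Such an \<open>a\<close> exists unless \<open>G = {0, y} \<cong> \<int>/2\<int>\<close>.\<close>

lemma iso_to_Z2_if_two_elements:
  fixes y :: "'a::ab_group_add"
  assumes "y \<noteq> 0" and two: "\<And>a. a = 0 \<or> a = y"
  shows "iso_to_Z2 TYPE('a)"
proof -
  define f :: "'a \<Rightarrow> bit" where "f a = (if a = 0 then 0 else 1)" for a
  have "y + y = 0"
    using two[of "y + y"] \<open>y \<noteq> 0\<close> by auto
  have "bij f"
  proof (rule bijI)
    show "inj f" unfolding inj_def f_def using two by auto
    show "surj f" unfolding surj_def f_def
      by (metis (full_types) bit_not_one_iff \<open>y \<noteq> 0\<close>)
  qed
  moreover have "f (u + v) = f u + f v" for u v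
    using two[of u] two[of v] \<open>y + y = 0\<close> \<open>y \<noteq> 0\<close> unfolding f_def by auto
  ultimately show ?thesis
    unfolding iso_to_Z2_def by blast
qed

locale compatible_ordered_group =
  fixes le :: "'a::ab_group_add \<Rightarrow> 'a \<Rightarrow> bool"
  assumes compatible: "compatible_qo_group le"
    and antisym: "le x y \<Longrightarrow> le y x \<Longrightarrow> x = y"
begin

lemma refl: "le x x"
  and linear: "le x y \<or> le y x"
  using compatible unfolding compatible_qo_group_def total_quasi_order_def by auto

lemma add_right_mono_neq: "le x y \<Longrightarrow> z \<noteq> y \<Longrightarrow> le (x + z) (y + z)"
  using compatible antisym unfolding compatible_qo_group_def qequiv_def by blast

lemma add_right_mono_self:
  assumes "le x y" and "y + y \<noteq> 0"
  shows "le (x + y) (y + y)"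
proof -
  have "-y \<noteq> y"
    using \<open>y + y \<noteq> 0\<close> by (metis add.right_inverse)
  then have "le (x - y) 0"
    using add_right_mono_neq[OF \<open>le x y\<close>, of "-y"] by simp
  then have "le (x - y + (y + y)) (0 + (y + y))"
    using add_right_mono_neq \<open>y + y \<noteq> 0\<close> by metis
  then show ?thesis
    by (simp add: algebra_simps)
qed

lemma order_two_nonneg_eq_0:
  assumes "le 0 y" and "y + y = 0" and "a \<noteq> 0" and "a \<noteq> y"
  shows "y = 0"
proof -
  have a_le: "le a (y + a)"
    using add_right_mono_neq[OF \<open>le 0 y\<close> \<open>a \<noteq> y\<close>] by simp
  then have "le (a + y) (y + a + y)"
    using add_right_mono_neq \<open>a \<noteq> 0\<close> by simp
  then have "le (a + y) a"
    using \<open>y + y = 0\<close> by (simp add: algebra_simps)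
  with a_le have "a + y = a"
    using antisym by (metis add.commute)
  then show ?thesis by simp
qed

lemma add_right_mono_order_two:
  assumes "le x y" and "y + y = 0" and "a \<noteq> 0" and "a \<noteq> y"
  shows "le (x + y) (y + y)"
proof (rule ccontr)
  assume "\<not> le (x + y) (y + y)"
  then have le_sum: "le 0 (x + y)" and "x \<noteq> y"
    using linear refl \<open>y + y = 0\<close> by metis+
  have "x = 0"
  proof (rule ccontr)
    assume "x \<noteq> 0"
    then have "le (0 + y) (x + y + y)"
      using add_right_mono_neq[OF le_sum, of y] by simp
    then have "le y x"
      using \<open>y + y = 0\<close> by (simp add: add.assoc)
    with \<open>le x y\<close> \<open>x \<noteq> y\<close> show False
      using antisym by blast
  qed
  with \<open>le x y\<close> order_two_nonneg_eq_0 assms have "y = 0"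
    by blast
  with \<open>\<not> le (x + y) (y + y)\<close> \<open>x = 0\<close> show False
    using refl by simp
qed

end

theorem mainTheorem5:
  fixes le :: "'a::ab_group_add \<Rightarrow> 'a \<Rightarrow> bool"
  assumes "compatible_qo_group le"
    and "\<forall>x y. le x y \<and> le y x \<longrightarrow> x = y"
    and "\<not> iso_to_Z2 TYPE('a)"
  shows "\<forall>x y z. le x y \<longrightarrow> le (x + z) (y + z)"
proof (intro allI impI)
  interpret compatible_ordered_group le
    using assms(1,2) by unfold_locales blast+
  fix x y z
  assume "le x y"
  show "le (x + z) (y + z)"
  proof (cases "z = y")
    case False
    with \<open>le x y\<close> show ?thesis by (rule add_right_mono_neq)
  next
    case True
    consider "y + y \<noteq> 0" | "y = 0" | a where "y + y = 0" "a \<noteq> 0" "a \<noteq> y"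
      using iso_to_Z2_if_two_elements assms(3) by blast
    then show ?thesis
    proof cases
      case 1
      with \<open>le x y\<close> True show ?thesis by (simp add: add_right_mono_self)
    next
      case 2
      with \<open>le x y\<close> True show ?thesis by simp
    next
      case 3
      with \<open>le x y\<close> True show ?thesis using add_right_mono_order_two by blast
    qed
  qed
qed

end
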